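(* Fix integers $0\le k\le n$ and $x\in\mathbb Z_{\ge0}$, and let $S$ have law $\mathbf P^n_x$. For $0\le i\le k$ and $y\ge0$ let $f(y,i)=\mathbf E^{n-i}_y[S_{k-i}]$. Then $M_i=f(S_i,i)$, $0\le i\le k$, is a martingale with respect to the natural filtration of $S$, and $|M_{i+1}-M_i|\le2$ for $0\le i\le k-1$. When $k=n$ one has explicitly $f(y,i)=-1+\frac{y+1}{\psi(y;n-i)}$.
   Context: Let $p_n(w)$ be the probability that simple symmetric random walk on $\mathbb Z$ started at $0$ is at $w$ at time $n$. For $x,y\in\mathbb Z_{\ge0}$, $p^{(1/2)}_n(x,y)=p_n(x-y)-p_n(x+y+2)$ and $\psi(x;n)=\sum_{y\ge0}p^{(1/2)}_n(x,y)$. $\mathbf P^N_y$ is the uniform probability measure on paths $(s_0,\dots,s_N)\in\mathbb Z_{\ge0}^{N+1}$ with $s_0=y$ and $|s_{i+1}-s_i|=1$; $S$ is its coordinate process and $\mathbf E^N_y$ its expectation. *)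

theory Defs
  imports "HOL-Probability.Probability"
begin

definition srw_p :: "nat \<Rightarrow> int \<Rightarrow> real" where
  "srw_p n w = (if \<bar>w\<bar> \<le> int n \<and> even (int n + w)
                then real (n choose nat ((int n + w) div 2)) / 2 ^ n else 0)"

text \<open>Killed (at -1) transition kernel p^(1/2)_n(x,y) = p_n(x-y) - p_n(x+y+2).\<close>
definition p_half :: "nat \<Rightarrow> int \<Rightarrow> int \<Rightarrow> real" where
  "p_half n x y = srw_p n (x - y) - srw_p n (x + y + 2)"

definition psi :: "int \<Rightarrow> nat \<Rightarrow> real" where
  "psi x n = (\<Sum>y. p_half n x (int y))"

definition paths :: "nat \<Rightarrow> int \<Rightarrow> (nat \<Rightarrow> int) set" where
  "paths N y = {s. s 0 = y \<and> (\<forall>i\<le>N. 0 \<le> s i) \<and> (\<forall>i<N. \<bar>s (Suc i) - s i\<bar> = 1)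
                  \<and> (\<forall>i>N. s i = 0)}"

definition Ppath :: "nat \<Rightarrow> int \<Rightarrow> (nat \<Rightarrow> int) pmf" where
  "Ppath N y = pmf_of_set (paths N y)"

definition Ef :: "nat \<Rightarrow> int \<Rightarrow> nat \<Rightarrow> real" where
  "Ef N y j = measure_pmf.expectation (Ppath N y) (\<lambda>s. real_of_int (s j))"

end

theory Submission imports Defs begin

text \<open>
  Under \<open>\<P>\<^sup>n\<^sub>x\<close> the coordinate process is a Markov chain: given \<open>S\<^sub>i = y\<close>, the remaining path
  is uniform on the nonnegative paths of length \<open>n - i\<close> from \<open>y\<close>. Hence the tower property makes
  \<open>f(S\<^sub>i, i)\<close> a martingale, and \<open>f\<close> satisfies the one-step recursion
  \<open>f(y, i) = a\<^sub>y f(y + 1, i + 1) + (1 - a\<^sub>y) f(y - 1, i + 1)\<close>, where \<open>a\<^sub>y = N(y + 1) / (N(y + 1) + N(y - 1))\<close>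
  and \<open>N(z)\<close> counts nonnegative paths of length \<open>n - i - 1\<close> from \<open>z\<close>. Since \<open>N\<close> is concave in \<open>z\<close>,
  \<open>a\<^sub>y\<close> decreases in \<open>y\<close>, and this makes the recursion preserve the Lipschitz bound
  \<open>|f(y + 1, i) - f(y, i)| \<le> 1\<close>, which starts from \<open>f(y, k) = y\<close>. One step of \<open>M\<close> moves by at most
  one unit in \<open>y\<close> and one unit in \<open>i\<close>, whence the bound 2.

  For \<open>k = n\<close>, the reflection principle gives \<open>N(y) = 2\<^sup>m \<psi>(y; m)\<close> for paths of length \<open>m\<close>, and
  \<open>S + 1\<close> killed at \<open>-1\<close> is a martingale of the free walk, so the paths from \<open>y\<close> have
  \<open>\<Sum> (S\<^sub>m + 1) = (y + 1) 2\<^sup>m\<close>.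
\<close>

definition path_cons :: "int \<Rightarrow> (nat \<Rightarrow> int) \<Rightarrow> nat \<Rightarrow> int" where
  "path_cons y c = (\<lambda>j. case j of 0 \<Rightarrow> y | Suc j \<Rightarrow> c j)"

lemma path_cons_simps [simp]: "path_cons y c 0 = y" "path_cons y c (Suc j) = c j"
  by (simp_all add: path_cons_def)

lemma inj_path_cons: "inj (path_cons y)"
  by (rule injI) (metis ext path_cons_simps(2))

lemma paths_neg: "y < 0 \<Longrightarrow> paths m y = {}"
  unfolding paths_def by auto

lemma paths_0: "0 \<le> y \<Longrightarrow> paths 0 y = {\<lambda>i. if i = 0 then y else 0}"
  unfolding paths_def by (auto simp: fun_eq_iff)

lemma path_cons_in_paths:
  assumes "c \<in> paths m z" "\<bar>z - y\<bar> = 1" "0 \<le> y"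
  shows "path_cons y c \<in> paths (Suc m) y"
  using assms unfolding paths_def by (auto simp: path_cons_def split: nat.split)

lemma paths_Suc:
  assumes "0 \<le> y"
  shows "paths (Suc m) y = path_cons y ` paths m (y + 1) \<union> path_cons y ` paths m (y - 1)"
proof
  show "path_cons y ` paths m (y + 1) \<union> path_cons y ` paths m (y - 1) \<subseteq> paths (Suc m) y"
    using path_cons_in_paths[OF _ _ assms] by force
next
  show "paths (Suc m) y \<subseteq> path_cons y ` paths m (y + 1) \<union> path_cons y ` paths m (y - 1)"
  proof
    fix t assume t: "t \<in> paths (Suc m) y"
    then have "t = path_cons y (\<lambda>j. t (Suc j))" "(\<lambda>j. t (Suc j)) \<in> paths m (t 1)"
      unfolding paths_def by (auto simp: fun_eq_iff path_cons_def split: nat.split)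
    moreover have "t 1 = y + 1 \<or> t 1 = y - 1"
      using t unfolding paths_def by force
    ultimately show "t \<in> path_cons y ` paths m (y + 1) \<union> path_cons y ` paths m (y - 1)"
      by (metis UnI1 UnI2 image_eqI)
  qed
qed

lemma finite_paths: "finite (paths m y)"
proof (induction m arbitrary: y)
  case 0 then show ?case by (cases "y < 0") (auto simp: paths_neg paths_0)
next
  case (Suc m) then show ?case by (cases "y < 0") (auto simp: paths_neg paths_Suc)
qed

lemma paths_nonempty: "0 \<le> y \<Longrightarrow> paths m y \<noteq> {}"
  by (induction m arbitrary: y) (auto simp: paths_0 paths_Suc)

lemma set_pmf_Ppath: "0 \<le> y \<Longrightarrow> set_pmf (Ppath m y) = paths m y"
  by (simp add: Ppath_def finite_paths paths_nonempty)

lemma sum_paths_Suc: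
  assumes "0 \<le> y"
  shows "(\<Sum>c\<in>paths (Suc m) y. F c) =
           (\<Sum>c\<in>paths m (y + 1). F (path_cons y c)) + (\<Sum>c\<in>paths m (y - 1). F (path_cons y c))"
proof -
  have "path_cons y ` paths m (y + 1) \<inter> path_cons y ` paths m (y - 1) = {}"
    unfolding paths_def by (auto dest: injD[OF inj_path_cons])
  then show ?thesis
    unfolding paths_Suc[OF assms]
    by (simp add: sum.union_disjoint finite_paths sum.reindex inj_on_subset[OF inj_path_cons])
qed

section \<open>Counting paths\<close>

definition path_count :: "nat \<Rightarrow> int \<Rightarrow> real" where
  "path_count m y = real (card (paths m y))"

lemma path_count_eq_sum: "path_count m y = (\<Sum>c\<in>paths m y. 1)"
  by (simp add: path_count_def)

lemma path_count_neg: "y < 0 \<Longrightarrow> path_count m y = 0"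
  by (simp add: path_count_def paths_neg)

lemma path_count_0: "0 \<le> y \<Longrightarrow> path_count 0 y = 1"
  by (simp add: path_count_def paths_0)

lemma path_count_nonneg: "0 \<le> path_count m y"
  by (simp add: path_count_def)

lemma path_count_pos: "0 \<le> y \<Longrightarrow> 0 < path_count m y"
  by (simp add: path_count_def finite_paths paths_nonempty card_gt_0_iff)

lemma path_count_Suc: "0 \<le> y \<Longrightarrow> path_count (Suc m) y = path_count m (y + 1) + path_count m (y - 1)"
  unfolding path_count_eq_sum by (rule sum_paths_Suc)

lemma path_count_concave:
  "0 \<le> y \<Longrightarrow> path_count m (y - 1) + path_count m (y + 1) \<le> 2 * path_count m y"
proof (induction m arbitrary: y)
  case 0
  then show ?case by (cases "y = 0") (auto simp: path_count_0 path_count_neg)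
next
  case (Suc m)
  show ?case
  proof (cases "y = 0")
    case True
    then show ?thesis using Suc.IH[of 1] by (simp add: path_count_Suc path_count_neg)
  next
    case False
    with Suc.prems have "1 \<le> y" by simp
    then show ?thesis
      using Suc.IH[of "y + 1"] Suc.IH[of "y - 1"]
      by (simp add: path_count_Suc algebra_simps)
  qed
qed

lemma mult_le_mult_of_concave:
  fixes p q r s :: real
  assumes "0 \<le> p" "0 \<le> s" "p + r \<le> 2 * q" "q + s \<le> 2 * r"
  shows "p * s \<le> q * r"
proof -
  have "p * s \<le> (2 * q - r) * (2 * r - q)"
    by (rule mult_mono) (use assms in linarith)+
  also have "\<dots> = q * r - 2 * (q - r)\<^sup>2"
    by (simp add: algebra_simps power2_eq_square)
  also have "\<dots> \<le> q * r"
    by simp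
  finally show ?thesis .
qed

definition up_prob :: "nat \<Rightarrow> int \<Rightarrow> real" where
  "up_prob m y = path_count m (y + 1) / path_count (Suc m) y"

lemma one_minus_up_prob:
  "0 \<le> y \<Longrightarrow> 1 - up_prob m y = path_count m (y - 1) / path_count (Suc m) y"
  using path_count_pos[of y "Suc m"] by (simp add: up_prob_def path_count_Suc field_simps)

lemma up_prob_0: "up_prob m 0 = 1"
  using path_count_pos[of 0 "Suc m"] by (simp add: up_prob_def path_count_Suc path_count_neg)

lemma up_prob_bounds:
  assumes "0 \<le> y"
  shows "0 \<le> up_prob m y" "up_prob m y \<le> 1"
proof -
  show "0 \<le> up_prob m y"
    by (simp add: up_prob_def path_count_nonneg)
  have "0 \<le> 1 - up_prob m y"
    unfolding one_minus_up_prob[OF assms] by (simp add: path_count_nonneg)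
  then show "up_prob m y \<le> 1"
    by simp
qed

lemma up_prob_antimono:
  assumes "0 \<le> y"
  shows "up_prob m (y + 1) \<le> up_prob m y"
proof -
  have "path_count m (y + 2) * path_count m (y - 1) \<le> path_count m (y + 1) * path_count m y"
    using path_count_concave[of y m] path_count_concave[of "y + 1" m] assms
    by (intro mult_le_mult_of_concave) (simp_all add: path_count_nonneg add_ac)
  then have "path_count m (y + 2) * path_count (Suc m) y \<le> path_count m (y + 1) * path_count (Suc m) (y + 1)"
    using assms by (simp add: path_count_Suc algebra_simps)
  then show ?thesis
    using assms path_count_pos[of y "Suc m"] path_count_pos[of "y + 1" "Suc m"]
    by (simp add: up_prob_def divide_simps add_ac mult.commute)
qed

lemma expectation_Ppath:
  "0 \<le> y \<Longrightarrow> measure_pmf.expectation (Ppath m y) F = (\<Sum>c\<in>paths m y. F c) / path_count m y"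
  by (simp add: Ppath_def integral_pmf_of_set finite_paths paths_nonempty path_count_def)

lemma sum_paths_eq_Ef: "(\<Sum>c\<in>paths m y. real_of_int (c j)) = path_count m y * Ef m y j"
proof (cases "y < 0")
  case True
  then show ?thesis by (simp add: paths_neg path_count_neg)
next
  case False
  then show ?thesis
    using path_count_pos[of y m] by (simp add: Ef_def expectation_Ppath)
qed

lemma sum_paths_start: "(\<Sum>c\<in>paths m y. F (c 0)) = path_count m y * F y"
proof -
  have "(\<Sum>c\<in>paths m y. F (c 0)) = (\<Sum>c\<in>paths m y. F y)"
    by (rule sum.cong) (auto simp: paths_def)
  then show ?thesis by (simp add: path_count_def)
qed

lemma Ef_0: "0 \<le> y \<Longrightarrow> Ef m y 0 = real_of_int y"
  using sum_paths_start[where F = real_of_int and m = m and y = y]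
    sum_paths_eq_Ef[where j = 0 and m = m and y = y] path_count_pos[of y m]
  by simp

lemma sum_paths_first_step:
  "0 \<le> y \<Longrightarrow> (\<Sum>c\<in>paths (Suc m) y. F (c 1)) =
      path_count m (y + 1) * F (y + 1) + path_count m (y - 1) * F (y - 1)"
  by (simp add: sum_paths_Suc sum_paths_start)

lemma Ef_Suc_Suc_average:
  assumes "0 \<le> y"
  shows "Ef (Suc m) y (Suc j) =
           (path_count m (y + 1) * Ef m (y + 1) j + path_count m (y - 1) * Ef m (y - 1) j)
             / path_count (Suc m) y"
proof -
  have "path_count (Suc m) y * Ef (Suc m) y (Suc j) =
          path_count m (y + 1) * Ef m (y + 1) j + path_count m (y - 1) * Ef m (y - 1) j"
    using assms by (simp flip: sum_paths_eq_Ef add: sum_paths_Suc)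
  then show ?thesis
    using path_count_pos[OF assms, of "Suc m"] by (simp add: eq_divide_eq mult.commute)
qed

lemma Ef_Suc_Suc:
  assumes "0 \<le> y"
  shows "Ef (Suc m) y (Suc j) = up_prob m y * Ef m (y + 1) j + (1 - up_prob m y) * Ef m (y - 1) j"
  unfolding one_minus_up_prob[OF assms] unfolding up_prob_def Ef_Suc_Suc_average[OF assms]
  by (simp add: add_divide_distrib)

lemma expectation_Ppath_Ef_first_step:
  assumes "0 \<le> y"
  shows "measure_pmf.expectation (Ppath (Suc m) y) (\<lambda>c. Ef m (c 1) j) = Ef (Suc m) y (Suc j)"
proof -
  have "(\<Sum>c\<in>paths (Suc m) y. Ef m (c 1) j) =
          path_count m (y + 1) * Ef m (y + 1) j + path_count m (y - 1) * Ef m (y - 1) j"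
    by (rule sum_paths_first_step[OF assms])
  then show ?thesis
    by (simp add: expectation_Ppath[OF assms] Ef_Suc_Suc_average[OF assms])
qed

section \<open>The Lipschitz bound\<close>

lemma abs_convex_comb3_le:
  fixes u v w x y z B :: real
  assumes "0 \<le> u" "0 \<le> v" "0 \<le> w" "u + v + w = 1" "\<bar>x\<bar> \<le> B" "\<bar>y\<bar> \<le> B" "\<bar>z\<bar> \<le> B"
  shows "\<bar>u * x + v * y + w * z\<bar> \<le> B"
proof -
  have "\<bar>u * x + v * y + w * z\<bar> \<le> u * \<bar>x\<bar> + v * \<bar>y\<bar> + w * \<bar>z\<bar>"
    using assms(1-3) by (simp add: abs_mult abs_triangle_ineq order_trans[OF abs_triangle_ineq])
  also have "\<dots> \<le> u * B + v * B + w * B"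
    using assms by (intro add_mono mult_left_mono) auto
  finally show ?thesis
    using assms(4) by (simp add: distrib_right[symmetric])
qed

lemma Ef_lipschitz: "j \<le> m \<Longrightarrow> 0 \<le> y \<Longrightarrow> \<bar>Ef m (y + 1) j - Ef m y j\<bar> \<le> 1"
proof (induction j arbitrary: m y)
  case 0
  then show ?case by (simp add: Ef_0)
next
  case (Suc j)
  then obtain m' where m: "m = Suc m'" and "j \<le> m'"
    by (cases m) auto
  define D where "D z = Ef m' (z + 1) j - Ef m' z j" for z
  have D: "0 \<le> z \<Longrightarrow> \<bar>D z\<bar> \<le> 1" for z
    using Suc.IH[OF \<open>j \<le> m'\<close>] by (simp add: D_def)
  define a a' where "a = up_prob m' y" and "a' = up_prob m' (y + 1)"
  have a: "0 \<le> a'" "a' \<le> a" "a \<le> 1"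
    using up_prob_bounds[of "y + 1" m'] up_prob_bounds[of y m'] up_prob_antimono[of y m'] Suc.prems
    by (auto simp: a_def a'_def)
  text \<open>At \<open>y = 0\<close> the weight \<open>1 - a\<close> vanishes, so the junk value \<open>D (- 1)\<close> drops out.\<close>
  have "Ef (Suc m') (y + 1) (Suc j) - Ef (Suc m') y (Suc j) =
          a' * D (y + 1) + (a - a') * (- D y) + (1 - a) * (if y = 0 then 0 else D (y - 1))"
    using Suc.prems up_prob_0[of m']
    by (simp add: Ef_Suc_Suc a_def a'_def D_def algebra_simps add_ac)
  also have "\<bar>\<dots>\<bar> \<le> 1"
    using a Suc.prems by (intro abs_convex_comb3_le) (auto intro: D)
  finally show ?case
    unfolding m .
qed

lemma Ef_Suc_Suc_near:
  assumes "j \<le> m" "0 \<le> y"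
  shows "\<bar>Ef (Suc m) y (Suc j) - Ef m y j\<bar> \<le> 1"
proof -
  define a where "a = up_prob m y"
  define d d' where "d = Ef m (y + 1) j - Ef m y j"
    and "d' = (if y = 0 then 0 else Ef m (y - 1) j - Ef m y j)"
  have "Ef (Suc m) y (Suc j) - Ef m y j = a * d + (1 - a) * d'"
    using assms(2) up_prob_0[of m] by (simp add: Ef_Suc_Suc a_def d_def d'_def algebra_simps)
  moreover have "\<bar>d\<bar> \<le> 1" "\<bar>d'\<bar> \<le> 1" "0 \<le> a" "a \<le> 1"
    using assms Ef_lipschitz[OF assms(1), of y] Ef_lipschitz[OF assms(1), of "y - 1"]
      up_prob_bounds[of y m]
    by (auto simp: a_def d_def d'_def abs_minus_commute)
  ultimately show ?thesis
    using convex_bound_le[of d 1 d' a "1 - a"] convex_bound_le[of "- d" 1 "- d'" a "1 - a"]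
    by (auto simp: abs_le_iff)
qed

lemma Ef_step_bound:
  assumes "j \<le> m" "0 \<le> y" "0 \<le> z" "\<bar>z - y\<bar> = 1"
  shows "\<bar>Ef m z j - Ef (Suc m) y (Suc j)\<bar> \<le> 2"
proof -
  consider "z = y + 1" | "y = z + 1"
    using assms(4) by linarith
  then have "\<bar>Ef m z j - Ef m y j\<bar> \<le> 1"
    using assms Ef_lipschitz[OF assms(1), of y] Ef_lipschitz[OF assms(1), of z]
    by cases (auto simp: abs_minus_commute)
  then show ?thesis
    using Ef_Suc_Suc_near[OF assms(1,2)] by linarith
qed

section \<open>Conditioning on an initial segment\<close>

lemma cond_pmf_of_set:
  assumes "finite A" "A \<inter> E \<noteq> {}"
  shows "cond_pmf (pmf_of_set A) E = pmf_of_set (A \<inter> E)"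
proof (rule pmf_eqI)
  fix t
  have "A \<noteq> {}" "card A \<noteq> 0" "card (A \<inter> E) \<noteq> 0"
    using assms by auto
  moreover from this have "set_pmf (pmf_of_set A) \<inter> E \<noteq> {}"
    using assms by simp
  ultimately show "pmf (cond_pmf (pmf_of_set A) E) t = pmf (pmf_of_set (A \<inter> E)) t"
    using assms by (auto simp: pmf_cond measure_pmf_of_set indicator_def)
qed

definition graft :: "(nat \<Rightarrow> int) \<Rightarrow> nat \<Rightarrow> (nat \<Rightarrow> int) \<Rightarrow> nat \<Rightarrow> int" where
  "graft s i c = (\<lambda>j. if j < i then s j else c (j - i))"

lemma inj_graft: "inj (graft s i)"
proof (rule injI, rule ext)
  fix c d j assume "graft s i c = graft s i d"
  then have "graft s i c (i + j) = graft s i d (i + j)" by simp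
  then show "c j = d j" by (simp add: graft_def)
qed

lemma graft_in_paths:
  assumes s: "s \<in> paths n x" and "i \<le> n" and c: "c \<in> paths (n - i) (s i)"
  shows "graft s i c \<in> paths n x"
proof -
  have "\<bar>graft s i c (Suc j) - graft s i c j\<bar> = 1" if "j < n" for j
  proof -
    consider "Suc j < i" | "Suc j = i" | "i \<le> j" by linarith
    then show ?thesis
      using s c \<open>j < n\<close> unfolding paths_def graft_def
      by cases (auto simp: Suc_diff_le)
  qed
  then show ?thesis
    using assms unfolding paths_def graft_def by auto
qed

lemma paths_cylinder_eq_graft_image:
  assumes "s \<in> paths n x" "i \<le> n"
  shows "paths n x \<inter> {t. \<forall>j\<le>i. t j = s j} = graft s i ` paths (n - i) (s i)"
proof
  show "paths n x \<inter> {t. \<forall>j\<le>i. t j = s j} \<subseteq> graft s i ` paths (n - i) (s i)"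
  proof
    fix t assume t: "t \<in> paths n x \<inter> {t. \<forall>j\<le>i. t j = s j}"
    then have "t = graft s i (\<lambda>j. t (i + j))" "(\<lambda>j. t (i + j)) \<in> paths (n - i) (s i)"
      using assms(2) unfolding paths_def graft_def by (auto simp: fun_eq_iff)
    then show "t \<in> graft s i ` paths (n - i) (s i)" by blast
  qed
  show "graft s i ` paths (n - i) (s i) \<subseteq> paths n x \<inter> {t. \<forall>j\<le>i. t j = s j}"
    using assms graft_in_paths unfolding paths_def graft_def by auto
qed

lemma cond_Ppath_cylinder:
  assumes "s \<in> paths n x" "i \<le> n"
  shows "cond_pmf (Ppath n x) {t. \<forall>j\<le>i. t j = s j} = map_pmf (graft s i) (Ppath (n - i) (s i))"
proof -
  have "0 \<le> s i"
    using assms unfolding paths_def by auto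
  then show ?thesis
    using assms inj_on_subset[OF inj_graft]
    by (auto simp: Ppath_def cond_pmf_of_set finite_paths paths_nonempty map_pmf_of_set_inj
                   paths_cylinder_eq_graft_image)
qed

section \<open>The explicit formula for \<open>k = n\<close>\<close>

lemma srw_p_even:
  assumes "int m + w = 2 * r"
  shows "srw_p m w = (if 0 \<le> r then real (m choose nat r) / 2 ^ m else 0)"
proof -
  have "r > int m \<Longrightarrow> m choose nat r = 0" by (simp add: binomial_eq_0)
  then show ?thesis
    using assms unfolding srw_p_def by auto
qed

lemma srw_p_odd: "odd (int m + w) \<Longrightarrow> srw_p m w = 0"
  by (simp add: srw_p_def)

lemma srw_p_Suc: "srw_p (Suc m) w = (srw_p m (w + 1) + srw_p m (w - 1)) / 2"
proof (cases "even (int m + 1 + w)")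
  case True
  then obtain r where r: "int m + 1 + w = 2 * r" by (rule evenE)
  have "srw_p (Suc m) w = (if 0 \<le> r then real (Suc m choose nat r) / 2 ^ Suc m else 0)"
    using r by (intro srw_p_even) simp
  moreover have "srw_p m (w + 1) = (if 0 \<le> r then real (m choose nat r) / 2 ^ m else 0)"
    using r by (intro srw_p_even) simp
  moreover have "srw_p m (w - 1) = (if 0 \<le> r - 1 then real (m choose nat (r - 1)) / 2 ^ m else 0)"
    using r by (intro srw_p_even) simp
  moreover have "Suc m choose nat r = (m choose nat (r - 1)) + (m choose nat r)" if "r \<ge> 1"
  proof -
    have "nat r = Suc (nat (r - 1))"
      using that by (simp add: nat_eq_iff)
    then show ?thesis
      by (simp add: binomial_Suc_Suc)
  qed
  ultimately show ?thesis
    by (cases "r \<ge> 1") (auto simp: add_divide_distrib)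
next
  case False
  then show ?thesis by (simp add: srw_p_odd add_ac)
qed

lemma srw_p_uminus: "srw_p m (- w) = srw_p m w"
proof (cases "even (int m + w)")
  case True
  then obtain r where r: "int m + w = 2 * r" by (rule evenE)
  have "srw_p m (- w) = (if 0 \<le> int m - r then real (m choose nat (int m - r)) / 2 ^ m else 0)"
    using r by (intro srw_p_even) simp
  moreover have "0 \<le> r \<Longrightarrow> r \<le> int m \<Longrightarrow> m choose nat (int m - r) = m choose nat r"
    by (metis binomial_symmetric nat_diff_distrib nat_int nat_mono of_nat_0_le_iff)
  ultimately show ?thesis
    using srw_p_even[OF r] by (auto simp: binomial_eq_0)
next
  case False
  then have "odd (int m + - w)" by presburger
  then show ?thesis using False by (simp add: srw_p_odd)
qed

lemma p_half_Suc: "p_half (Suc m) y z = (p_half m (y + 1) z + p_half m (y - 1) z) / 2"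
  unfolding p_half_def srw_p_Suc by (simp add: algebra_simps diff_divide_distrib)

lemma p_half_minus_one: "p_half m (- 1) z = 0"
  using srw_p_uminus[of m "z + 1"] by (simp add: p_half_def add_ac)

text \<open>Reflection principle: \<open>p_half\<close> is the transition kernel of the walk killed at \<open>-1\<close>.\<close>

lemma count_paths_ending:
  "- 1 \<le> y \<Longrightarrow> 0 \<le> z \<Longrightarrow> (\<Sum>c\<in>paths m y. of_bool (c m = z)) = 2 ^ m * p_half m y z"
proof (induction m arbitrary: y)
  case 0
  then show ?case
    by (cases "y = - 1") (auto simp: paths_neg paths_0 p_half_minus_one p_half_def srw_p_def)
next
  case (Suc m)
  show ?case
  proof (cases "y = - 1")
    case True
    then show ?thesis by (simp add: paths_neg p_half_minus_one)
  next
    case False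
    then show ?thesis
      using Suc.IH[of "y + 1"] Suc.IH[of "y - 1"] Suc.prems
      by (simp add: sum_paths_Suc p_half_Suc distrib_left)
  qed
qed

lemma path_count_eq_psi:
  assumes "0 \<le> y"
  shows "path_count m y = 2 ^ m * psi y m"
proof -
  define Z where "Z = (\<lambda>c. nat (c m)) ` paths m y"
  have "finite Z" by (simp add: Z_def finite_paths)
  have end_nonneg: "c \<in> paths m y \<Longrightarrow> 0 \<le> c m" for c
    by (simp add: paths_def)
  have p_half_eq: "p_half m y (int n) = (\<Sum>c\<in>paths m y. of_bool (nat (c m) = n)) / 2 ^ m" for n
    using count_paths_ending[of y "int n" m] assms end_nonneg
    by (auto simp: nat_eq_iff intro!: sum.cong)
  have "psi y m = (\<Sum>n\<in>Z. p_half m y (int n))"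
    unfolding psi_def using \<open>finite Z\<close>
    by (rule suminf_finite) (auto simp: p_half_eq Z_def intro!: sum.neutral)
  also have "\<dots> = (\<Sum>c\<in>paths m y. \<Sum>n\<in>Z. of_bool (nat (c m) = n)) / 2 ^ m"
    by (simp add: p_half_eq sum_divide_distrib sum.swap[of _ Z])
  also have "\<dots> = path_count m y / 2 ^ m"
    using \<open>finite Z\<close> by (simp add: path_count_eq_sum Z_def)
  finally show ?thesis by simp
qed

lemma sum_paths_end_plus_one:
  "- 1 \<le> y \<Longrightarrow> (\<Sum>c\<in>paths m y. real_of_int (c m) + 1) = (real_of_int y + 1) * 2 ^ m"
proof (induction m arbitrary: y)
  case 0
  then show ?case by (cases "y = - 1") (auto simp: paths_neg paths_0)
next
  case (Suc m)
  show ?case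
  proof (cases "y = - 1")
    case True
    then show ?thesis by (simp add: paths_neg)
  next
    case False
    then show ?thesis
      using Suc.IH[of "y + 1"] Suc.IH[of "y - 1"] Suc.prems
      by (simp add: sum_paths_Suc algebra_simps)
  qed
qed

lemma Ef_final:
  assumes "0 \<le> y"
  shows "Ef m y m = - 1 + (real_of_int y + 1) / psi y m"
proof -
  have "path_count m y * Ef m y m = (\<Sum>c\<in>paths m y. real_of_int (c m))"
    by (rule sum_paths_eq_Ef[symmetric])
  also have "\<dots> = (real_of_int y + 1) * 2 ^ m - path_count m y"
    using sum_paths_end_plus_one[of y m] assms
    by (simp add: sum.distrib path_count_def algebra_simps)
  finally have "2 ^ m * (psi y m * (Ef m y m + 1)) = 2 ^ m * (real_of_int y + 1)"
    using path_count_eq_psi[OF assms] by (simp add: algebra_simps)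
  then have "psi y m * (Ef m y m + 1) = real_of_int y + 1"
    by simp
  moreover have "0 < psi y m"
    using path_count_pos[OF assms, of m] path_count_eq_psi[OF assms, of m]
    by (simp add: zero_less_mult_iff)
  ultimately have "Ef m y m + 1 = (real_of_int y + 1) / psi y m"
    by (simp add: eq_divide_eq mult.commute)
  then show ?thesis
    by linarith
qed

theorem propositionA6:
  fixes k n :: nat and x :: int
  assumes "k \<le> n" and "0 \<le> x"
  shows "(\<forall>i<k. \<forall>s\<in>set_pmf (Ppath n x).
            measure_pmf.expectation (cond_pmf (Ppath n x) {t. \<forall>j\<le>i. t j = s j})
               (\<lambda>t. Ef (n - Suc i) (t (Suc i)) (k - Suc i))
            = Ef (n - i) (s i) (k - i))
       \<and> (\<forall>i<k. \<forall>s\<in>set_pmf (Ppath n x).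
            \<bar>Ef (n - Suc i) (s (Suc i)) (k - Suc i) - Ef (n - i) (s i) (k - i)\<bar> \<le> 2)
       \<and> (k = n \<longrightarrow> (\<forall>i\<le>k. \<forall>y\<ge>0.
            Ef (n - i) y (k - i) = -1 + (real_of_int y + 1) / psi y (n - i)))"
proof (intro conjI allI impI ballI)
  fix i s assume "i < k" "s \<in> set_pmf (Ppath n x)"
  then have s: "s \<in> paths n x" and "0 \<le> s i" "0 \<le> s (Suc i)" "\<bar>s (Suc i) - s i\<bar> = 1"
    using assms by (auto simp: set_pmf_Ppath paths_def)
  have steps: "n - i = Suc (n - Suc i)" "k - i = Suc (k - Suc i)" "k - Suc i \<le> n - Suc i"
    using \<open>i < k\<close> assms(1) by auto
  have "measure_pmf.expectation (cond_pmf (Ppath n x) {t. \<forall>j\<le>i. t j = s j})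
          (\<lambda>t. Ef (n - Suc i) (t (Suc i)) (k - Suc i))
        = measure_pmf.expectation (Ppath (Suc (n - Suc i)) (s i)) (\<lambda>c. Ef (n - Suc i) (c 1) (k - Suc i))"
    using s \<open>i < k\<close> assms(1) by (simp add: cond_Ppath_cylinder steps(1) graft_def)
  also have "\<dots> = Ef (n - i) (s i) (k - i)"
    unfolding steps(1,2) using \<open>0 \<le> s i\<close> by (rule expectation_Ppath_Ef_first_step)
  finally show "measure_pmf.expectation (cond_pmf (Ppath n x) {t. \<forall>j\<le>i. t j = s j})
               (\<lambda>t. Ef (n - Suc i) (t (Suc i)) (k - Suc i)) = Ef (n - i) (s i) (k - i)" .
  show "\<bar>Ef (n - Suc i) (s (Suc i)) (k - Suc i) - Ef (n - i) (s i) (k - i)\<bar> \<le> 2"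
    unfolding steps(1,2) using steps(3) \<open>0 \<le> s i\<close> \<open>0 \<le> s (Suc i)\<close> \<open>\<bar>s (Suc i) - s i\<bar> = 1\<close>
    by (rule Ef_step_bound)
next
  fix i and y :: int assume "k = n" "i \<le> k" "0 \<le> y"
  then show "Ef (n - i) y (k - i) = -1 + (real_of_int y + 1) / psi y (n - i)"
    by (simp add: Ef_final)
qed

end
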